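(* Let $q^{**}(g)=\max\{q(R): K(g;R)\le1\}$. Then the width of the Finsleroid is $$2q^{**}(g)=2\,e^{-\frac12G\Phi^{**}},$$ where $\Phi^{**}=\Phi(g;R)$ evaluated at any $R$ with $q(R)>0$ and $Z=-g\,q(R)$ (this value does not depend on the choice of such $R$); moreover the maximum is attained at points with $Z=-g\,q$.
   Context: Let $N\ge2$, $V_N=\mathbb{R}^N$ with points $R=(R^1,\dots,R^N)$, $Z=R^N$; indices $a,b$ run over $1,\dots,N-1$, repeated indices summed. Fix a symmetric positive-definite matrix $(r_{ab})$, $q(R)=\sqrt{r_{ab}R^aR^b}$. Fix $g\in(-2,2)$, $h=\sqrt{1-g^2/4}$, $G=g/h$. Define $B(g;R)=Z^2+gqZ+q^2$, $A(g;R)=Z+\frac12gq$, $\Phi(g;R)=\arctan(A/(hq))$ for $q>0$ ($\Phi=\pm\pi/2$ if $q=0$, $Z\gtrless0$), $J=e^{\frac12G\Phi}$, and the Finsleroid metric function $K(g;R)=\sqrt{B}\,J$ ($K(g;0)=0$). The Finsleroid is $\{R:K(g;R)\le1\}$. *)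

theory Defs
  imports "HOL-Analysis.Analysis"
begin

text \<open>A point R of V_N = R^N is represented as a pair (y, Z) with
  y = (R^1,...,R^(N-1)) :: real^'m  (so N - 1 = CARD('m) \<ge> 1) and Z = R^N.\<close>

definition qf :: "real^'m^'m \<Rightarrow> real^'m \<Rightarrow> real" where
  "qf r y = sqrt (y \<bullet> (r *v y))"

definition hh :: "real \<Rightarrow> real" where
  "hh g = sqrt (1 - g^2 / 4)"

definition GG :: "real \<Rightarrow> real" where
  "GG g = g / hh g"

definition Bf :: "real^'m^'m \<Rightarrow> real \<Rightarrow> real^'m \<Rightarrow> real \<Rightarrow> real" where
  "Bf r g y z = z^2 + g * qf r y * z + (qf r y)^2"

definition Af :: "real^'m^'m \<Rightarrow> real \<Rightarrow> real^'m \<Rightarrow> real \<Rightarrow> real" where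
  "Af r g y z = z + g * qf r y / 2"

definition Phi :: "real^'m^'m \<Rightarrow> real \<Rightarrow> real^'m \<Rightarrow> real \<Rightarrow> real" where
  "Phi r g y z =
     (if qf r y > 0 then arctan (Af r g y z / (hh g * qf r y))
      else if z > 0 then pi / 2 else - (pi / 2))"

definition Jf :: "real^'m^'m \<Rightarrow> real \<Rightarrow> real^'m \<Rightarrow> real \<Rightarrow> real" where
  "Jf r g y z = exp (GG g * Phi r g y z / 2)"

definition Kf :: "real^'m^'m \<Rightarrow> real \<Rightarrow> real^'m \<Rightarrow> real \<Rightarrow> real" where
  "Kf r g y z = (if y = 0 \<and> z = 0 then 0 else sqrt (Bf r g y z) * Jf r g y z)"

definition finsleroid :: "real^'m^'m \<Rightarrow> real \<Rightarrow> ((real^'m) \<times> real) set" where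
  "finsleroid r g = {(y, z). Kf r g y z \<le> 1}"

end

theory Submission
  imports Defs
begin

text \<open>For q > 0 put s = A / (h q). Since B = A^2 + h^2 q^2, the metric function factors as
  K = h q exp (F s) with F s = ln (1 + s^2) / 2 + G/2 arctan s. As F' s = (s + G/2) / (1 + s^2),
  F has a strict global minimum at s = -G/2, i.e. on the cone Z = -g q, where Phi = arctan (-G/2).
  Since h^2 (1 + G^2/4) = 1, this gives K \<ge> q / w with w = exp (-G/2 arctan (-G/2)), with
  equality exactly on the cone. Hence q \<le> w on the Finsleroid, and q = w is attained precisely
  at its points on the cone.\<close>

definition finsleroid_exponent :: "real \<Rightarrow> real \<Rightarrow> real" where
  "finsleroid_exponent G s = ln (1 + s^2) / 2 + G / 2 * arctan s"

definition finsleroid_halfwidth :: "real \<Rightarrow> real" where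
  "finsleroid_halfwidth g = exp (- GG g * arctan (- GG g / 2) / 2)"

lemma finsleroid_exponent_has_real_derivative:
  "(finsleroid_exponent G has_real_derivative (s + G / 2) / (1 + s^2)) (at s)"
proof -
  have "0 < 1 + s^2"
    by (simp add: add_pos_nonneg)
  then show ?thesis
    unfolding finsleroid_exponent_def
    by (auto intro!: derivative_eq_intros simp: divide_simps) algebra
qed

lemma finsleroid_exponent_strict_min:
  assumes "s \<noteq> - G / 2"
  shows "finsleroid_exponent G (- G / 2) < finsleroid_exponent G s"
proof -
  have cont: "continuous_on A (finsleroid_exponent G)" for A
    using finsleroid_exponent_has_real_derivative
    by (meson DERIV_isCont continuous_at_imp_continuous_on)
  have denom: "1 + x^2 > 0" for x :: real
    by (simp add: add_pos_nonneg)
  consider "s < - G / 2" | "- G / 2 < s"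
    using assms by linarith
  then show ?thesis
  proof cases
    case 1
    show ?thesis
    proof (rule DERIV_neg_imp_decreasing_open[OF 1 _ cont])
      fix x assume "s < x" "x < - G / 2"
      then show "\<exists>d. (finsleroid_exponent G has_real_derivative d) (at x) \<and> d < 0"
        using finsleroid_exponent_has_real_derivative denom
        by (intro exI conjI) (auto intro: divide_neg_pos)
    qed
  next
    case 2
    show ?thesis
    proof (rule DERIV_pos_imp_increasing_open[OF 2 _ cont])
      fix x assume "- G / 2 < x" "x < s"
      then show "\<exists>d. (finsleroid_exponent G has_real_derivative d) (at x) \<and> d > 0"
        using finsleroid_exponent_has_real_derivative denom
        by (intro exI conjI) (auto intro: divide_pos_pos)
    qed
  qed
qed

lemma square_less_four: "-2 < g \<Longrightarrow> g < 2 \<Longrightarrow> (g :: real)^2 < 4"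
  using abs_le_square_iff[of 2 g] by auto

lemma hh_pos: "-2 < g \<Longrightarrow> g < 2 \<Longrightarrow> 0 < hh g"
  using square_less_four[of g] by (simp add: hh_def)

lemma hh_squared: "-2 < g \<Longrightarrow> g < 2 \<Longrightarrow> (hh g)^2 = 1 - g^2 / 4"
  using square_less_four[of g] by (simp add: hh_def)

lemma finsleroid_halfwidth_pos: "0 < finsleroid_halfwidth g"
  by (simp add: finsleroid_halfwidth_def)

lemma qf_zero [simp]: "qf r 0 = 0"
  by (simp add: qf_def)

lemma qf_scaleR: "qf r (c *\<^sub>R y) = \<bar>c\<bar> * qf r y"
proof -
  have "(c *\<^sub>R y) \<bullet> (r *v (c *\<^sub>R y)) = c^2 * (y \<bullet> (r *v y))"
    by (simp add: matrix_vector_mult_scaleR power2_eq_square)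
  then show ?thesis
    by (simp add: qf_def real_sqrt_mult)
qed

context
  fixes r :: "real^'m^'m"
  assumes posdef: "\<And>y. y \<noteq> 0 \<Longrightarrow> 0 < y \<bullet> (r *v y)"
begin

lemma qf_pos_iff: "0 < qf r y \<longleftrightarrow> y \<noteq> 0"
  using posdef[of y] by (auto simp: qf_def)

lemma qf_nonneg: "0 \<le> qf r y"
  using qf_pos_iff[of y] by (cases "y = 0") auto

lemma qf_attains: "0 \<le> c \<Longrightarrow> \<exists>y. qf r y = c"
proof -
  assume "0 \<le> c"
  obtain i :: 'm where True by blast
  have "0 < qf r (axis i 1)"
    by (simp add: qf_pos_iff axis_eq_0_iff)
  then have "qf r ((c / qf r (axis i 1)) *\<^sub>R axis i 1) = c"
    using \<open>0 \<le> c\<close> by (simp add: qf_scaleR)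
  then show ?thesis ..
qed

end

lemma Kf_eq_exp_finsleroid_exponent:
  assumes g: "-2 < g" "g < 2" and q: "0 < qf r y"
  shows "Kf r g y z
    = hh g * qf r y * exp (finsleroid_exponent (GG g) (Af r g y z / (hh g * qf r y)))"
proof -
  define s where "s = Af r g y z / (hh g * qf r y)"
  have hq: "0 < hh g * qf r y"
    using hh_pos[OF g] q by simp
  have "Bf r g y z = (Af r g y z)^2 + (1 - g^2 / 4) * (qf r y)^2"
    by (simp add: Bf_def Af_def power2_eq_square algebra_simps)
  also have "\<dots> = (Af r g y z)^2 + (hh g * qf r y)^2"
    by (simp add: power_mult_distrib hh_squared[OF g])
  also have "\<dots> = (hh g * qf r y)^2 * (1 + s^2)"
    using hh_pos[OF g] q by (simp add: s_def field_simps)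
  finally have "sqrt (Bf r g y z) = hh g * qf r y * sqrt (1 + s^2)"
    using hq by (simp add: real_sqrt_mult)
  also have "sqrt (1 + s^2) = exp (ln (1 + s^2) / 2)"
    using add_pos_nonneg[of 1 "s^2"] by (simp add: powr_half_sqrt[symmetric] powr_def)
  moreover have "Jf r g y z = exp (GG g / 2 * arctan s)"
    using q by (simp add: Jf_def Phi_def s_def)
  moreover have "y \<noteq> 0"
    using q by auto
  ultimately show ?thesis
    unfolding s_def[symmetric] by (simp add: Kf_def finsleroid_exponent_def exp_add)
qed

lemma Af_div_eq_iff:
  assumes g: "-2 < g" "g < 2" and q: "0 < qf r y"
  shows "Af r g y z / (hh g * qf r y) = - GG g / 2 \<longleftrightarrow> z = - g * qf r y"
proof -
  have "Af r g y z / (hh g * qf r y) = - GG g / 2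
      \<longleftrightarrow> Af r g y z = - GG g / 2 * (hh g * qf r y)"
    using hh_pos[OF g] q by (simp add: divide_eq_eq)
  also have "- GG g / 2 * (hh g * qf r y) = - g * qf r y / 2"
    using hh_pos[OF g] by (simp add: GG_def)
  finally show ?thesis
    by (auto simp: Af_def)
qed

lemma Phi_on_cone:
  assumes g: "-2 < g" "g < 2" and q: "0 < qf r y"
  shows "Phi r g y (- g * qf r y) = arctan (- GG g / 2)"
proof -
  have "Af r g y (- g * qf r y) / (hh g * qf r y) = - GG g / 2"
    using Af_div_eq_iff[OF g q] by blast
  then show ?thesis
    using q by (simp add: Phi_def)
qed

lemma finsleroid_halfwidth_eq_exponent_min:
  assumes g: "-2 < g" "g < 2"
  shows "finsleroid_halfwidth g = 1 / (hh g * exp (finsleroid_exponent (GG g) (- GG g / 2)))"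
proof -
  have h: "0 < hh g"
    using hh_pos[OF g] .
  have "1 + (- GG g / 2)^2 = 1 / (hh g)^2"
    using h hh_squared[OF g] by (simp add: GG_def field_simps power2_eq_square)
  then have "exp (ln (1 + (- GG g / 2)^2) / 2) = 1 / hh g"
    using h by (simp add: ln_div ln_realpow exp_minus inverse_eq_divide)
  then have "hh g * exp (finsleroid_exponent (GG g) (- GG g / 2)) = exp (GG g / 2 * arctan (- GG g / 2))"
    using h by (simp add: finsleroid_exponent_def exp_add)
  then show ?thesis
    by (simp add: finsleroid_halfwidth_def exp_minus[symmetric] inverse_eq_divide[symmetric])
qed

lemma Kf_ge_qf_div_halfwidth:
  assumes g: "-2 < g" "g < 2" and q: "0 < qf r y"
  shows "qf r y / finsleroid_halfwidth g \<le> Kf r g y z"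
proof -
  let ?s = "Af r g y z / (hh g * qf r y)"
  have "finsleroid_exponent (GG g) (- GG g / 2) \<le> finsleroid_exponent (GG g) ?s"
    using finsleroid_exponent_strict_min[of ?s "GG g"] by (cases "?s = - GG g / 2") auto
  then show ?thesis
    using hh_pos[OF g] q
    by (simp add: Kf_eq_exp_finsleroid_exponent[OF g q] finsleroid_halfwidth_eq_exponent_min[OF g])
qed

lemma Kf_eq_qf_div_halfwidth_iff:
  assumes g: "-2 < g" "g < 2" and q: "0 < qf r y"
  shows "Kf r g y z = qf r y / finsleroid_halfwidth g \<longleftrightarrow> z = - g * qf r y"
proof -
  let ?s = "Af r g y z / (hh g * qf r y)"
  have "Kf r g y z = qf r y / finsleroid_halfwidth g
      \<longleftrightarrow> finsleroid_exponent (GG g) ?s = finsleroid_exponent (GG g) (- GG g / 2)"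
    using hh_pos[OF g] q
    by (simp add: Kf_eq_exp_finsleroid_exponent[OF g q] finsleroid_halfwidth_eq_exponent_min[OF g])
  also have "\<dots> \<longleftrightarrow> ?s = - GG g / 2"
    using finsleroid_exponent_strict_min[of ?s "GG g"] by fastforce
  also have "\<dots> \<longleftrightarrow> z = - g * qf r y"
    by (rule Af_div_eq_iff[OF g q])
  finally show ?thesis .
qed

lemma qf_le_finsleroid_halfwidth:
  assumes g: "-2 < g" "g < 2"
    and posdef: "\<And>y. y \<noteq> 0 \<Longrightarrow> 0 < y \<bullet> (r *v y)"
    and p: "(y, z) \<in> finsleroid r g"
  shows "qf r y \<le> finsleroid_halfwidth g"
proof (cases "0 < qf r y")
  case True
  then have "qf r y / finsleroid_halfwidth g \<le> 1"
    using Kf_ge_qf_div_halfwidth[OF g True, of z] p by (simp add: finsleroid_def)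
  then show ?thesis
    using finsleroid_halfwidth_pos[of g] by (simp add: divide_le_eq)
next
  case False
  then show ?thesis
    using qf_nonneg[OF posdef, of y] finsleroid_halfwidth_pos[of g] by simp
qed

lemma cone_point_mem_finsleroid:
  assumes g: "-2 < g" "g < 2" and q: "qf r y = finsleroid_halfwidth g"
  shows "(y, - g * qf r y) \<in> finsleroid r g"
proof -
  have "0 < qf r y"
    using q finsleroid_halfwidth_pos by simp
  then show ?thesis
    using Kf_eq_qf_div_halfwidth_iff[OF g, of r y "- g * qf r y"] q finsleroid_halfwidth_pos[of g]
    by (simp add: finsleroid_def)
qed

lemma finsleroid_halfwidth_attained_only_on_cone:
  assumes g: "-2 < g" "g < 2"
    and p: "(y, z) \<in> finsleroid r g" and q: "finsleroid_halfwidth g \<le> qf r y"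
  shows "z = - g * qf r y"
proof -
  have q_pos: "0 < qf r y"
    using q finsleroid_halfwidth_pos[of g] by linarith
  have "1 \<le> qf r y / finsleroid_halfwidth g"
    using q finsleroid_halfwidth_pos[of g] by simp
  moreover have "Kf r g y z \<le> 1"
    using p by (simp add: finsleroid_def)
  ultimately have "Kf r g y z = qf r y / finsleroid_halfwidth g"
    using Kf_ge_qf_div_halfwidth[OF g q_pos, of z] by linarith
  then show ?thesis
    using Kf_eq_qf_div_halfwidth_iff[OF g q_pos] by blast
qed

theorem theorem2p9:
  fixes r :: "real^'m^'m" and g :: real
  assumes g_range: "-2 < g" "g < 2"
    and r_sym: "transpose r = r"
    and r_posdef: "\<And>y. y \<noteq> 0 \<Longrightarrow> y \<bullet> (r *v y) > 0"
  shows "(\<forall>y z y' z'. qf r y > 0 \<and> z = - g * qf r y \<and> qf r y' > 0 \<and> z' = - g * qf r y'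
            \<longrightarrow> Phi r g y z = Phi r g y' z')
       \<and> (\<exists>p\<in>finsleroid r g. \<forall>p'\<in>finsleroid r g. qf r (fst p') \<le> qf r (fst p))
       \<and> (\<forall>y z. qf r y > 0 \<and> z = - g * qf r y \<longrightarrow>
            2 * (SUP p\<in>finsleroid r g. qf r (fst p)) = 2 * exp (- GG g * Phi r g y z / 2))
       \<and> (\<forall>p\<in>finsleroid r g. (\<forall>p'\<in>finsleroid r g. qf r (fst p') \<le> qf r (fst p))
            \<longrightarrow> snd p = - g * qf r (fst p))"
proof -
  let ?F = "finsleroid r g" and ?w = "finsleroid_halfwidth g"
  have bound: "qf r (fst p) \<le> ?w" if "p \<in> ?F" for p
    using qf_le_finsleroid_halfwidth[OF g_range r_posdef] that by (cases p) auto
  obtain y0 where y0: "qf r y0 = ?w"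
    using qf_attains[OF r_posdef] finsleroid_halfwidth_pos less_imp_le by blast
  have p0: "(y0, - g * qf r y0) \<in> ?F"
    using cone_point_mem_finsleroid[OF g_range y0] .
  have sup: "(SUP p\<in>?F. qf r (fst p)) = ?w"
    by (rule cSup_eq_maximum) (use p0 y0 bound in force)+
  show ?thesis
  proof (intro conjI allI impI ballI)
    show "\<exists>p\<in>?F. \<forall>p'\<in>?F. qf r (fst p') \<le> qf r (fst p)"
      using y0 bound by (intro bexI[OF _ p0]) simp
  next
    fix p assume "p \<in> ?F" "\<forall>p'\<in>?F. qf r (fst p') \<le> qf r (fst p)"
    then show "snd p = - g * qf r (fst p)"
      using finsleroid_halfwidth_attained_only_on_cone[OF g_range, of "fst p" "snd p"] p0 y0
      by fastforce
  qed (use Phi_on_cone[OF g_range, of r] sup in \<open>auto simp: finsleroid_halfwidth_def\<close>)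
qed

end
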